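(* Let $\Sigma$ be a finite alphabet with $N=|\Sigma|\ge2$, let $\delta$ be a Hamming compatible metric on $\Sigma^*$, and let $u\in\Sigma_n$, $w\in\Sigma_m$ with $n\ge m$ and $\delta(u,w)<d_2(u,w)$. Let $h=H(\underline{u},\underline{w})$. Then exactly $(N-1)^{n-h}$ Hamming opposites $v$ of $u$ satisfy $H(\underline{u},\underline{w})+H(\underline{v},\underline{w})=m$, and every such $v$ satisfies $\delta(v,w)\ge d_2(v,w)$. In particular, when $N=2$, the unique Hamming opposite $v$ of $u$ satisfies $\delta(v,w)\ge d_2(v,w)$.
   Context: $\Sigma_n$ is the set of words of length $n$ over $\Sigma$, $\Sigma^*$ the set of all finite words, $l(u)$ the length of $u$, $H$ the Hamming distance between equal-length words. For arbitrary $x,y$, if $l(x)\ge l(y)$, $\underline{x}$ is the prefix of $x$ of length $l(y)$ and $\underline{y}=y$ (symmetrically otherwise). Metrics are integer-valued; a metric $\delta$ on $\Sigma^*$ is Hamming compatible if $\delta(x,y)=H(x,y)$ whenever $l(x)=l(y)$. $d_2(x,y)=H(\underline{x},\underline{y})+\lceil |l(x)-l(y)|/2\rceil$. Two words of the same length $n$ are Hamming opposites if their Hamming distance is $n$. *)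

theory Defs
  imports Complex_Main "HOL-Library.Cardinality"
begin

text \<open>Words over the alphabet are lists over a finite type 'a; the alphabet size N is CARD('a).\<close>

definition hamming :: "'a list \<Rightarrow> 'a list \<Rightarrow> nat" where
  "hamming x y = card {i. i < length x \<and> i < length y \<and> x ! i \<noteq> y ! i}"

text \<open>The underlined word: ul x y is the prefix of x of length min(l(x), l(y)).\<close>
definition ul :: "'a list \<Rightarrow> 'a list \<Rightarrow> 'a list" where
  "ul x y = take (length y) x"

definition is_metric :: "('a list \<Rightarrow> 'a list \<Rightarrow> int) \<Rightarrow> bool" where
  "is_metric d \<longleftrightarrow>
     (\<forall>x y. d x y \<ge> 0) \<and> (\<forall>x y. d x y = 0 \<longleftrightarrow> x = y) \<and> (\<forall>x y. d x y = d y x) \<and>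
     (\<forall>x y z. d x z \<le> d x y + d y z)"

definition hamming_compatible :: "('a list \<Rightarrow> 'a list \<Rightarrow> int) \<Rightarrow> bool" where
  "hamming_compatible d \<longleftrightarrow> (\<forall>x y. length x = length y \<longrightarrow> d x y = int (hamming x y))"

definition d2 :: "'a list \<Rightarrow> 'a list \<Rightarrow> int" where
  "d2 x y = int (hamming (ul x y) (ul y x)) + \<lceil>\<bar>real (length x) - real (length y)\<bar> / 2\<rceil>"

definition hamming_opposite :: "'a list \<Rightarrow> 'a list \<Rightarrow> bool" where
  "hamming_opposite u v \<longleftrightarrow> length v = length u \<and> hamming u v = length u"

end

theory Submission
  imports Defs
begin

(* Let u have length n, w length m <= n, and let D be the set of
   positions i < m where u and w disagree, so h = |D|.  For a Hamming opposite v
   of u, at every position i < m outside D we have v!i <> u!i = w!i, hence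
   H(v,w) = (m - h) + |{i in D. v!i <> w!i}|.  Thus h + H(v,w) = m holds iff v
   agrees with w on D, i.e. iff v!i = w!i on D and v!i <> u!i elsewhere: the
   count (N-1)^(n-h) follows by counting lists componentwise.  For such v the
   triangle inequality n = delta(u,v) <= delta(u,w) + delta(w,v) together with
   delta(u,w) < d2(u,w) = h + ceil((n-m)/2) forces delta(v,w) >= d2(v,w).  For
   N = 2 an opposite of u is unique (the other letter at each position) and
   automatically agrees with w on D, so it is covered by the previous part. *)

lemma card_lists_componentwise:
  fixes A :: "nat \<Rightarrow> ('a::finite) set"
  shows "card {xs. length xs = n \<and> (\<forall>i<n. xs!i \<in> A i)} = (\<Prod>i<n. card (A i))"
proof (induction n arbitrary: A)
  case 0
  then show ?case by simp
next
  case (Suc n)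
  have split_head: "{xs. length xs = Suc n \<and> (\<forall>i<Suc n. xs!i \<in> A i)}
      = (\<lambda>(x,xs). x#xs) ` (A 0 \<times> {xs. length xs = n \<and> (\<forall>i<n. xs!i \<in> A (Suc i))})"
  proof (intro set_eqI iffI)
    fix xs assume "xs \<in> {xs. length xs = Suc n \<and> (\<forall>i<Suc n. xs!i \<in> A i)}"
    then show "xs \<in> (\<lambda>(x,xs). x#xs) ` (A 0 \<times> {xs. length xs = n \<and> (\<forall>i<n. xs!i \<in> A (Suc i))})"
      by (cases xs) (auto simp: image_iff)
  qed (auto simp: less_Suc_eq_0_disj)
  have cons_inj: "inj_on (\<lambda>(x,xs). x#xs) X" for X :: "('a \<times> 'a list) set"
    by (auto simp: inj_on_def)
  show ?case
    unfolding split_head card_image[OF cons_inj] card_cartesian_product Suc[of "\<lambda>i. A (Suc i)"]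
    by (simp add: prod.lessThan_Suc_shift del: prod.lessThan_Suc)
qed

definition disagreements :: "'a list \<Rightarrow> 'a list \<Rightarrow> nat set" where
  "disagreements x w = {i. i < length w \<and> x!i \<noteq> w!i}"

lemma hamming_ul_disagreements:
  assumes "length w \<le> length x"
  shows "hamming (ul x w) (ul w x) = card (disagreements x w)"
  using assms unfolding hamming_def ul_def disagreements_def
  by (intro arg_cong[where f=card]) auto

lemma hamming_opposite_iff:
  "hamming_opposite u v \<longleftrightarrow> length v = length u \<and> (\<forall>i<length u. v!i \<noteq> u!i)"
proof
  assume opp: "hamming_opposite u v"
  then have len: "length v = length u" by (simp add: hamming_opposite_def)
  have "card {i. i < length u \<and> u!i \<noteq> v!i} = card {..<length u}"
    using opp len unfolding hamming_opposite_def hamming_def by simp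
  then have "{i. i < length u \<and> u!i \<noteq> v!i} = {..<length u}"
    by (intro card_subset_eq) auto
  then show "length v = length u \<and> (\<forall>i<length u. v!i \<noteq> u!i)"
    using len by (metis (mono_tags, lifting) lessThan_iff mem_Collect_eq)
next
  assume "length v = length u \<and> (\<forall>i<length u. v!i \<noteq> u!i)"
  then have "{i. i < length u \<and> i < length v \<and> u!i \<noteq> v!i} = {..<length u}"
    by auto
  then show "hamming_opposite u v"
    using \<open>length v = length u \<and> _\<close> unfolding hamming_opposite_def hamming_def by simp
qed

lemma complementary_iff_agree_on_disagreements:
  assumes opp: "hamming_opposite u v" and short: "length w \<le> length u"
  shows "hamming (ul u w) (ul w u) + hamming (ul v w) (ul w v) = length w
         \<longleftrightarrow> (\<forall>i\<in>disagreements u w. v!i = w!i)"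
proof -
  let ?m = "length w" and ?D = "disagreements u w"
  let ?E = "{i\<in>?D. v!i \<noteq> w!i}"
  have lv: "length v = length u" and v_ne_u: "\<forall>i<?m. v!i \<noteq> u!i"
    using opp short by (auto simp: hamming_opposite_iff)
  have D_sub: "?D \<subseteq> {..<?m}" by (auto simp: disagreements_def)
  have fin_D: "finite ?D" using D_sub finite_subset by blast
  have "disagreements v w = ({..<?m} - ?D) \<union> ?E"
    using v_ne_u by (auto simp: disagreements_def)
  also have "card \<dots> = card ({..<?m} - ?D) + card ?E"
    using fin_D by (intro card_Un_disjoint) auto
  finally have "card (disagreements v w) = (?m - card ?D) + card ?E"
    using card_Diff_subset[OF fin_D D_sub] by simp
  moreover have "card ?D \<le> ?m"
    using card_mono[OF _ D_sub] by simp
  moreover have "card ?E = 0 \<longleftrightarrow> (\<forall>i\<in>?D. v!i = w!i)"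
    using fin_D by auto
  ultimately show ?thesis
    using short lv by (simp add: hamming_ul_disagreements)
qed

lemma card_opposites_agreeing:
  fixes u w :: "('a::finite) list"
  assumes short: "length w \<le> length u"
  shows "card {v. hamming_opposite u v \<and> (\<forall>i\<in>disagreements u w. v!i = w!i)}
         = (CARD('a) - 1) ^ (length u - card (disagreements u w))"
proof -
  let ?n = "length u" and ?D = "disagreements u w"
  define A where "A i = (if i \<in> ?D then {w!i} else UNIV - {u!i})" for i
  have D_sub: "?D \<subseteq> {..<?n}" using short by (auto simp: disagreements_def)
  have "{v. hamming_opposite u v \<and> (\<forall>i\<in>?D. v!i = w!i)}
        = {v. length v = ?n \<and> (\<forall>i<?n. v!i \<in> A i)}"
    using D_sub by (auto simp: hamming_opposite_iff A_def disagreements_def)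
  then have "card {v. hamming_opposite u v \<and> (\<forall>i\<in>?D. v!i = w!i)}
             = (\<Prod>i<?n. card (A i))"
    by (simp add: card_lists_componentwise)
  also have "\<dots> = (\<Prod>i\<in>?D. card (A i)) * (\<Prod>i\<in>{..<?n} - ?D. card (A i))"
    using D_sub by (subst prod.subset_diff[of ?D]) auto
  also have "\<dots> = (\<Prod>i\<in>{..<?n} - ?D. CARD('a) - 1)"
    by (simp add: A_def card_Diff_singleton)
  also have "\<dots> = (CARD('a) - 1) ^ (?n - card ?D)"
    using D_sub by (simp add: card_Diff_subset finite_subset)
  finally show ?thesis .
qed

lemma twice_ceiling_half_le:
  fixes n m :: nat
  assumes "m \<le> n"
  shows "2 * \<lceil>\<bar>real n - real m\<bar> / 2\<rceil> \<le> int (n - m) + 1"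
proof -
  have "real_of_int \<lceil>real (n - m) / 2\<rceil> < real (n - m) / 2 + 1"
    using ceiling_correct[of "real (n - m) / 2"] by linarith
  then have "2 * \<lceil>real (n - m) / 2\<rceil> < int (n - m) + 2" by linarith
  moreover have "\<bar>real n - real m\<bar> = real (n - m)" using assms by simp
  ultimately show ?thesis by simp
qed

text \<open>If delta is strictly below d2 at (u,w), then at a complementary opposite v
  of u it is not: otherwise the triangle inequality through w would give
  delta(u,v) < n, contradicting Hamming compatibility.\<close>
lemma complementary_opposite_d2_le:
  assumes metric: "is_metric \<delta>" and compatible: "hamming_compatible \<delta>"
    and opp: "hamming_opposite u v" and short: "length w \<le> length u"
    and below: "\<delta> u w < d2 u w"
    and complementary: "hamming (ul u w) (ul w u) + hamming (ul v w) (ul w v) = length w"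
  shows "d2 v w \<le> \<delta> v w"
proof -
  let ?n = "length u" and ?m = "length w" and ?h = "hamming (ul u w) (ul w u)"
  let ?c = "\<lceil>\<bar>real ?n - real ?m\<bar> / 2\<rceil>"
  have lv: "length v = ?n" and "hamming u v = ?n"
    using opp by (auto simp: hamming_opposite_def)
  then have "\<delta> u v = int ?n"
    using compatible by (simp add: hamming_compatible_def)
  moreover have "\<delta> u v \<le> \<delta> u w + \<delta> v w"
    using metric unfolding is_metric_def by metis
  moreover have "d2 u w = int ?h + ?c" and "d2 v w = int (?m - ?h) + ?c"
    using lv complementary by (auto simp: d2_def)
  moreover have "2 * ?c \<le> int (?n - ?m) + 1"
    using twice_ceiling_half_le[OF short] .
  ultimately show ?thesis
    using below short complementary by linarith
qed

lemma binary_other_letter_unique: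
  fixes a x y :: "'a::finite"
  assumes "CARD('a) = 2" and "x \<noteq> a" and "y \<noteq> a"
  shows "x = y"
proof (rule ccontr)
  assume "x \<noteq> y"
  then have "card {x, y, a} = 3" using assms by simp
  moreover have "card {x, y, a} \<le> CARD('a)" by (rule card_mono) auto
  ultimately show False using assms by simp
qed

lemma binary_unique_opposite:
  fixes u :: "('a::finite) list"
  assumes binary: "CARD('a) = 2"
  shows "\<exists>!v. hamming_opposite u v"
proof (rule ex_ex1I)
  have "UNIV \<noteq> {x}" for x :: 'a
  proof
    assume "UNIV = {x}"
    then have "CARD('a) = card {x}" by (rule arg_cong)
    with binary show False by simp
  qed
  then have "\<exists>y. y \<noteq> x" for x :: 'a
    by blast
  then have other: "(SOME y. y \<noteq> x) \<noteq> x" for x :: 'a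
    by (rule someI_ex)
  have "hamming_opposite u (map (\<lambda>x. SOME y. y \<noteq> x) u)"
    by (simp add: hamming_opposite_iff other)
  then show "\<exists>v. hamming_opposite u v" ..
next
  fix v v' assume "hamming_opposite u v" "hamming_opposite u v'"
  then show "v = v'"
    by (intro nth_equalityI)
       (auto simp: hamming_opposite_iff intro: binary_other_letter_unique[OF binary])
qed

text \<open>Over a two-letter alphabet every opposite of u is complementary for w,
  since at a disagreement position of u and w it must carry the letter w!i.\<close>
lemma binary_opposite_complementary:
  fixes u v w :: "('a::finite) list"
  assumes binary: "CARD('a) = 2"
    and opp: "hamming_opposite u v" and short: "length w \<le> length u"
  shows "hamming (ul u w) (ul w u) + hamming (ul v w) (ul w v) = length w"
proof -
  have "v!i = w!i" if "i \<in> disagreements u w" for i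
  proof (rule binary_other_letter_unique[OF binary])
    show "v!i \<noteq> u!i" using opp short that by (auto simp: hamming_opposite_iff disagreements_def)
    show "w!i \<noteq> u!i" using that by (auto simp: disagreements_def)
  qed
  then show ?thesis
    using complementary_iff_agree_on_disagreements[OF opp short] by blast
qed

theorem mainTheorem10:
  fixes \<delta> :: "('a::finite) list \<Rightarrow> 'a list \<Rightarrow> int"
    and u w :: "'a list" and n m h :: nat
  assumes "CARD('a) \<ge> 2"
    and "is_metric \<delta>" and "hamming_compatible \<delta>"
    and "length u = n" and "length w = m" and "n \<ge> m"
    and "\<delta> u w < d2 u w"
    and "h = hamming (ul u w) (ul w u)"
  shows "card {v. hamming_opposite u v \<and>
                  hamming (ul u w) (ul w u) + hamming (ul v w) (ul w v) = m}
           = (CARD('a) - 1) ^ (n - h)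
       \<and> (\<forall>v. hamming_opposite u v \<and>
               hamming (ul u w) (ul w u) + hamming (ul v w) (ul w v) = m
             \<longrightarrow> \<delta> v w \<ge> d2 v w)
       \<and> (CARD('a) = 2 \<longrightarrow> (\<exists>!v. hamming_opposite u v) \<and>
             (\<forall>v. hamming_opposite u v \<longrightarrow> \<delta> v w \<ge> d2 v w))"
proof -
  have short: "length w \<le> length u" using assms(4-6) by simp
  have "hamming_opposite u v \<and> hamming (ul u w) (ul w u) + hamming (ul v w) (ul w v) = m
        \<longleftrightarrow> hamming_opposite u v \<and> (\<forall>i\<in>disagreements u w. v!i = w!i)" for v
    using complementary_iff_agree_on_disagreements[of u v w, OF _ short] assms(5) by auto
  then have "{v. hamming_opposite u v \<and>
            hamming (ul u w) (ul w u) + hamming (ul v w) (ul w v) = m}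
        = {v. hamming_opposite u v \<and> (\<forall>i\<in>disagreements u w. v!i = w!i)}"
    by simp
  moreover have "h = card (disagreements u w)"
    using assms(8) hamming_ul_disagreements[OF short] by simp
  ultimately have count: "card {v. hamming_opposite u v \<and>
            hamming (ul u w) (ul w u) + hamming (ul v w) (ul w v) = m}
        = (CARD('a) - 1) ^ (n - h)"
    using card_opposites_agreeing[OF short] assms(4) by simp
  have bound: "\<delta> v w \<ge> d2 v w"
    if "hamming_opposite u v"
       "hamming (ul u w) (ul w u) + hamming (ul v w) (ul w v) = m" for v
    using that assms(5) by (intro complementary_opposite_d2_le[OF assms(2,3) _ short assms(7)]) simp_all
  have binary_bound: "\<delta> v w \<ge> d2 v w" if "CARD('a) = 2" "hamming_opposite u v" for v
    using that bound binary_opposite_complementary[OF that short] assms(5) by simp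
  show ?thesis
    using count bound binary_bound binary_unique_opposite[of u] by simp
qed

end
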